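(* Let $I=\{1,\dots,m\}$, $J=\{1,\dots,n\}$, let $b\in\mathbb{R}^m$, let $\hat{x}\in\mathbb{R}^n$, and let $\Omega\subseteq\mathbb{R}^{m\times n}$ be a convex set. Consider the problem NLO-DG: \[ \min_{A,c,\pi}\ \sum_{j\in J}c_j\hat{x}_j-\sum_{i\in I}b_i\pi_i \] subject to $A\in\Omega$; $\sum_{j\in J}a_{ij}\hat{x}_j\ge b_i$ for all $i\in I$; $\sum_{i\in I}\pi_i=1$; $\sum_{i\in I}a_{ij}\pi_i=c_j$ for all $j\in J$; $\pi_i\ge 0$ for all $i\in I$. Here $A=(a_{ij})\in\mathbb{R}^{m\times n}$ with rows $a_i$, $c\in\mathbb{R}^n$, $\pi\in\mathbb{R}^m$. For each $i\in I$ let \[ t_i=\min_{A}\Big\{\sum_{j\in J}a_{ij}\hat{x}_j-b_i \;:\; A\in\Omega,\ A\hat{x}\ge b\Big\}, \] and let $A^{(i)}$ be an optimal solution of this problem. Let $i^*\in\arg\min_{i\in I}t_i$ and $A^*=A^{(i^* )}$ (with rows $a^*_i$). Then the optimal value of NLO-DG is $t_{i^*}$, and an optimal solution $(A,c,\pi)$ of NLO-DG is given by $a_i=a^*_i$ for all $i\in I$, $c=a^*_{i^*}$, $\pi=e_{i^*}$. Moreover, if for every $i\in I$ either $b_i>0$ or $a_i\neq 0$ for all $A\in\Omega\cap\{A: A\hat{x}\ge b\}$, then this solution satisfies $c\neq 0$ and $a_i\neq 0$ for all $i\in I$.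
   Context: $e_i$ denotes the $i$-th unit vector in $\mathbb{R}^m$. $a_i$ denotes the $i$-th row of a matrix $A$ (viewed as a vector in $\mathbb{R}^n$). *)

theory Defs
  imports "HOL-Analysis.Analysis"
begin

text \<open>Matrices A in R^{m x n} are rendered as real^'n^'m (rows indexed by 'm = I,
 columns by 'n = J); the row a_i is A $ i.\<close>

definition primal_feas :: "(real^'n^'m) set \<Rightarrow> real^'m \<Rightarrow> real^'n \<Rightarrow> real^'n^'m \<Rightarrow> bool" where
  "primal_feas \<Omega> b xh A \<longleftrightarrow> A \<in> \<Omega> \<and> (\<forall>i. (\<Sum>j\<in>UNIV. A $ i $ j * xh $ j) \<ge> b $ i)"

definition nlo_dg_feasible ::
  "(real^'n^'m) set \<Rightarrow> real^'m \<Rightarrow> real^'n \<Rightarrow> real^'n^'m \<Rightarrow> real^'n \<Rightarrow> real^'m \<Rightarrow> bool" where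
  "nlo_dg_feasible \<Omega> b xh A c \<pi> \<longleftrightarrow>
     primal_feas \<Omega> b xh A \<and>
     (\<Sum>i\<in>UNIV. \<pi> $ i) = 1 \<and>
     (\<forall>j. (\<Sum>i\<in>UNIV. A $ i $ j * \<pi> $ i) = c $ j) \<and>
     (\<forall>i. \<pi> $ i \<ge> 0)"

definition nlo_dg_obj :: "real^'m \<Rightarrow> real^'n \<Rightarrow> real^'n \<Rightarrow> real^'m \<Rightarrow> real" where
  "nlo_dg_obj b xh c \<pi> = (\<Sum>j\<in>UNIV. c $ j * xh $ j) - (\<Sum>i\<in>UNIV. b $ i * \<pi> $ i)"

definition row_slack :: "real^'m \<Rightarrow> real^'n \<Rightarrow> 'm \<Rightarrow> real^'n^'m \<Rightarrow> real" where
  "row_slack b xh i A = (\<Sum>j\<in>UNIV. A $ i $ j * xh $ j) - b $ i"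

end

theory Submission
  imports Defs
begin

text \<open>For NLO-DG-feasible \<open>(A, c, \<pi>)\<close> the objective equals \<open>\<Sum>\<^sub>i \<pi>\<^sub>i (a\<^sub>i x\<^sub>h - b\<^sub>i)\<close>,
  a convex combination of row slacks of the primal-feasible matrix \<open>A\<close>; each slack is at least
  \<open>t\<^sub>i \<ge> t\<^sub>i\<^sub>*\<close>, so the objective is at least \<open>t\<^sub>i\<^sub>*\<close>. Concentrating \<open>\<pi>\<close> on \<open>i\<^sup>*\<close> with
  \<open>A = A\<^sup>*\<close> attains this bound.\<close>

lemma sum_mult_axis_one:
  fixes f :: "'m::finite \<Rightarrow> 'a::comm_ring_1"
  shows "(\<Sum>i\<in>UNIV. f i * axis k 1 $ i) = f k"
  by (simp add: axis_def if_distrib cong: if_cong)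

lemma sum_axis_one: "(\<Sum>i\<in>UNIV. axis k (1::'a::comm_ring_1) $ i) = 1"
  by (simp add: axis_def)

lemma convex_comb_ge:
  fixes w f :: "'a \<Rightarrow> real"
  assumes "sum w S = 1" and "\<And>i. i \<in> S \<Longrightarrow> w i \<ge> 0" and "\<And>i. i \<in> S \<Longrightarrow> s \<le> f i"
  shows "s \<le> (\<Sum>i\<in>S. w i * f i)"
proof -
  have "s = (\<Sum>i\<in>S. w i * s)"
    using assms(1) by (simp add: sum_distrib_right[symmetric])
  also have "\<dots> \<le> (\<Sum>i\<in>S. w i * f i)"
    using assms(2,3) by (intro sum_mono mult_left_mono)
  finally show ?thesis .
qed

lemma nlo_dg_obj_eq_weighted_row_slack:
  assumes c_eq: "\<And>j. (\<Sum>i\<in>UNIV. A $ i $ j * \<pi> $ i) = c $ j"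
  shows "nlo_dg_obj b xh c \<pi> = (\<Sum>i\<in>UNIV. \<pi> $ i * row_slack b xh i A)"
proof -
  have "(\<Sum>j\<in>UNIV. c $ j * xh $ j) = (\<Sum>j\<in>UNIV. \<Sum>i\<in>UNIV. \<pi> $ i * (A $ i $ j * xh $ j))"
    unfolding c_eq[symmetric] by (simp add: sum_distrib_left sum_distrib_right mult_ac)
  also have "\<dots> = (\<Sum>i\<in>UNIV. \<pi> $ i * (\<Sum>j\<in>UNIV. A $ i $ j * xh $ j))"
    by (subst sum.swap) (simp add: sum_distrib_left)
  finally show ?thesis
    unfolding nlo_dg_obj_def row_slack_def
    by (simp add: right_diff_distrib sum_subtractf mult.commute)
qed

lemma nlo_dg_obj_ge:
  assumes "nlo_dg_feasible \<Omega> b xh A c \<pi>"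
    and "\<And>i A. primal_feas \<Omega> b xh A \<Longrightarrow> s \<le> row_slack b xh i A"
  shows "s \<le> nlo_dg_obj b xh c \<pi>"
proof -
  have A_feas: "primal_feas \<Omega> b xh A" and sum_\<pi>: "(\<Sum>i\<in>UNIV. \<pi> $ i) = 1"
    and \<pi>_nonneg: "\<And>i. \<pi> $ i \<ge> 0"
    and c_eq: "\<And>j. (\<Sum>i\<in>UNIV. A $ i $ j * \<pi> $ i) = c $ j"
    using assms(1) by (auto simp: nlo_dg_feasible_def)
  have "s \<le> (\<Sum>i\<in>UNIV. \<pi> $ i * row_slack b xh i A)"
    using sum_\<pi> \<pi>_nonneg assms(2)[OF A_feas] by (rule convex_comb_ge)
  also have "\<dots> = nlo_dg_obj b xh c \<pi>"
    using c_eq by (rule nlo_dg_obj_eq_weighted_row_slack[symmetric])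
  finally show ?thesis .
qed

lemma nlo_dg_feasible_axis:
  assumes "primal_feas \<Omega> b xh A"
  shows "nlo_dg_feasible \<Omega> b xh A (A $ k) (axis k 1)"
  using assms sum_mult_axis_one[of "\<lambda>i. A $ i $ j" k for j]
  by (simp add: nlo_dg_feasible_def sum_axis_one axis_def)

lemma nlo_dg_obj_axis: "nlo_dg_obj b xh (A $ k) (axis k 1) = row_slack b xh k A"
  by (simp add: nlo_dg_obj_def row_slack_def sum_mult_axis_one)

lemma primal_feas_row_nonzero:
  assumes "primal_feas \<Omega> b xh A" and "b $ i > 0"
  shows "A $ i \<noteq> 0"
proof
  assume "A $ i = 0"
  then have "(\<Sum>j\<in>UNIV. A $ i $ j * xh $ j) = 0" by simp
  with assms show False by (auto simp: primal_feas_def dest: spec[of _ i])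
qed

theorem theorem1:
  fixes \<Omega> :: "(real^'n^'m) set" and b :: "real^'m" and xh :: "real^'n"
    and Aopt :: "'m \<Rightarrow> real^'n^'m" and t :: "'m \<Rightarrow> real" and istar :: 'm
  assumes conv: "convex \<Omega>"
    and opt_feas: "\<And>i. primal_feas \<Omega> b xh (Aopt i)"
    and opt_min: "\<And>i A. primal_feas \<Omega> b xh A \<Longrightarrow> row_slack b xh i (Aopt i) \<le> row_slack b xh i A"
    and t_def: "\<And>i. t i = row_slack b xh i (Aopt i)"
    and istar: "\<And>i. t istar \<le> t i"
  shows "nlo_dg_feasible \<Omega> b xh (Aopt istar) (Aopt istar $ istar) (axis istar 1)
       \<and> nlo_dg_obj b xh (Aopt istar $ istar) (axis istar 1) = t istar
       \<and> (\<forall>A c \<pi>. nlo_dg_feasible \<Omega> b xh A c \<pi> \<longrightarrow> t istar \<le> nlo_dg_obj b xh c \<pi>)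
       \<and> ((\<forall>i. b $ i > 0 \<or> (\<forall>A. primal_feas \<Omega> b xh A \<longrightarrow> A $ i \<noteq> 0))
          \<longrightarrow> Aopt istar $ istar \<noteq> 0 \<and> (\<forall>i. Aopt istar $ i \<noteq> 0))"
proof -
  have lower_bound: "t istar \<le> row_slack b xh i A" if "primal_feas \<Omega> b xh A" for i A
    using istar[of i] opt_min[OF that, of i] t_def[of i] by linarith
  have rows_nonzero: "Aopt istar $ i \<noteq> 0"
    if "\<forall>i. b $ i > 0 \<or> (\<forall>A. primal_feas \<Omega> b xh A \<longrightarrow> A $ i \<noteq> 0)" for i
    using that opt_feas[of istar] primal_feas_row_nonzero by blast
  show ?thesis
    using nlo_dg_feasible_axis[OF opt_feas] nlo_dg_obj_axis t_def
      nlo_dg_obj_ge[OF _ lower_bound] rows_nonzero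
    by auto
qed

end
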